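(* Let $\{M_n\}_{n\ge0}$ be an $\mathbb R^d$-valued martingale with respect to a filtration $\{\mathcal F_n\}$ with $\mathbb E[\|M_0\|^p]<\infty$, where $p>2$, and suppose there is a constant $\nu$ with $\mathbb E[\|M_{n+1}-M_n\|^p\mid\mathcal F_n]\le\nu$ for all $n\ge0$. Let $\tau=\inf\{n>0:\|M_n\|<n\}$, and for $k>0$ let $S_k=\inf\{j\ge0:\|M_j\|\ge k/3\}$ and $T_k=\inf\{j\ge0:\|M_{j+1}-M_j\|\ge k/3\}$. Let $0<r<p$. Then there exists a constant $\theta''$ (independent of $n$) such that for all $n\ge1$, $$\mathbb E\big[\|M_n\|^r\mathbf 1_{\{\tau>n\}}\mathbf 1_{\{S_n>T_n\}}\big]\le\frac{\theta''}{n^{p-r}}.$$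
   Context: $\|\cdot\|$ denotes the Euclidean norm on $\mathbb R^d$. *)

theory Defs
  imports "HOL-Probability.Probability"
begin

definition filtration :: "'w measure \<Rightarrow> (nat \<Rightarrow> 'w measure) \<Rightarrow> bool" where
  "filtration M F \<longleftrightarrow> (\<forall>n. subalgebra M (F n)) \<and> (\<forall>n. sets (F n) \<subseteq> sets (F (Suc n)))"

definition martingale :: "'w measure \<Rightarrow> (nat \<Rightarrow> 'w measure) \<Rightarrow> (nat \<Rightarrow> 'w \<Rightarrow> 'a::euclidean_space) \<Rightarrow> bool" where
  "martingale M F X \<longleftrightarrow> filtration M F \<and>
     (\<forall>n. X n \<in> borel_measurable (F n)) \<and> (\<forall>n. integrable M (X n)) \<and>
     (\<forall>n. \<forall>b\<in>Basis. AE x in M. real_cond_exp M (F n) (\<lambda>y. X (Suc n) y \<bullet> b) x = X n x \<bullet> b)"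

definition first_time :: "(nat \<Rightarrow> bool) \<Rightarrow> enat" where
  "first_time P = (if \<exists>j. P j then enat (LEAST j. P j) else \<infinity>)"

end

theory Submission
  imports Defs
begin

text \<open>On the event \<open>{\<tau> > n, S\<^sub>n > T\<^sub>n}\<close> there is a time \<open>j < n\<close> with \<open>\<parallel>X j\<parallel> < n/3\<close>,
  \<open>\<parallel>X (j+1) - X j\<parallel> \<ge> n/3\<close> and \<open>\<parallel>X i\<parallel> \<ge> i\<close> for \<open>1 \<le> i \<le> j\<close>, so that \<open>\<parallel>X n\<parallel>\<^sup>r\<close> is at most
  \<open>3\<^sup>r (\<parallel>X (j+1) - X j\<parallel>\<^sup>r + (n/3)\<^bsup>r-p\<^esup> \<parallel>X n - X (j+1)\<parallel>\<^sup>p)\<close> there.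
  The conditional bound on the \<open>p\<close>-th moments of the increments controls the first term. The second is
  controlled by a Burkholder-type estimate \<open>E[1\<^sub>A \<parallel>X (k+m) - X k\<parallel>\<^sup>p] \<le> C (m+1)\<^bsup>p/2\<^esup> P(A)\<close> for
  \<open>A \<in> F k\<close>, proved by induction on \<open>m\<close> from a second-order expansion of \<open>\<parallel>x + h\<parallel>\<^sup>p\<close> whose
  first-order term has conditional mean zero. Both terms are thus \<open>O(n\<^bsup>r-p\<^esup>) P(\<tau> > j)\<close>, and
  \<open>P(\<tau> > j) \<le> P(\<parallel>X j\<parallel> \<ge> j) = O(j\<^bsup>-p/2\<^esup>)\<close> by Markov's inequality and the same moment estimate,
  which is summable because \<open>p > 2\<close>.\<close>

section \<open>Elementary inequalities\<close>

lemma powr_eq_powr_diff_mult_power: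
  fixes x q :: real
  assumes "x \<ge> 0"
  shows "x powr q = x powr (q - real k) * x ^ k"
proof (cases "x = 0 \<or> k = 0")
  case False
  then have "x > 0" using assms by auto
  then show ?thesis by (simp add: powr_realpow[symmetric] powr_add[symmetric])
qed auto

lemma powr_power2_half:
  fixes x q :: real
  assumes "x \<ge> 0"
  shows "(x ^ 2) powr (q / 2) = x powr q"
proof (cases "x = 0")
  case False
  with assms have "x ^ 2 = x powr 2" by (simp add: powr_realpow)
  then show ?thesis by (simp add: powr_powr)
qed simp

lemma powr_mult_powr_le_add:
  fixes u v s p :: real
  assumes "u \<ge> 0" "v \<ge> 0" "0 \<le> s" "s \<le> p"
  shows "u powr s * v powr (p - s) \<le> u powr p + v powr p"
proof (cases "u \<le> v")
  case True
  have "u powr s * v powr (p - s) \<le> v powr s * v powr (p - s)"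
    by (rule mult_right_mono) (use True assms in \<open>auto intro: powr_mono2\<close>)
  also have "\<dots> = v powr p" by (simp add: powr_add[symmetric])
  finally show ?thesis using powr_ge_zero[of u p] by linarith
next
  case False
  have "u powr s * v powr (p - s) \<le> u powr s * u powr (p - s)"
    by (rule mult_left_mono) (use False assms in \<open>auto intro: powr_mono2\<close>)
  also have "\<dots> = u powr p" by (simp add: powr_add[symmetric])
  finally show ?thesis using powr_ge_zero[of v p] by linarith
qed

lemma power2_le_one_add_powr:
  fixes v p :: real
  assumes "v \<ge> 0" "p \<ge> 2"
  shows "v ^ 2 \<le> 1 + v powr p"
proof (cases "v \<le> 1")
  case True
  then have "v ^ 2 \<le> 1" using assms by (simp add: power_le_one)
  then show ?thesis using powr_ge_zero[of v p] by linarith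
next
  case False
  then have "v ^ 2 = v powr 2" by (simp add: powr_realpow)
  also have "\<dots> \<le> v powr p" using False assms by (intro powr_mono) auto
  finally show ?thesis by simp
qed

lemma powr_minus_two_le:
  fixes u s p :: real
  assumes "u \<ge> 0" "s > 0" "p \<ge> 2"
  shows "u powr (p - 2) \<le> u powr p / s + s powr ((p - 2) / 2)"
proof (cases "u ^ 2 \<ge> s")
  case True
  with assms have "u > 0" by (cases "u = 0") auto
  then have "u powr (p - 2) = u powr p / u ^ 2"
    using powr_eq_powr_diff_mult_power[of u p 2] by simp
  also have "\<dots> \<le> u powr p / s" by (rule divide_left_mono) (use True assms \<open>u > 0\<close> in auto)
  finally show ?thesis using powr_ge_zero[of s "(p - 2) / 2"] by linarith
next
  case False
  have "u powr (p - 2) = (u ^ 2) powr ((p - 2) / 2)" using powr_power2_half[of u "p - 2"] assms by simp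
  also have "\<dots> \<le> s powr ((p - 2) / 2)" using False assms by (intro powr_mono2) auto
  finally show ?thesis using divide_nonneg_pos[OF powr_ge_zero[of u p] assms(2)] by linarith
qed

lemma powr_add_mult_powr_le_add_one_powr:
  fixes x g :: real
  assumes "x \<ge> 1" "g \<ge> 1"
  shows "x powr g + g * x powr (g - 1) \<le> (x + 1) powr g"
proof -
  have "\<exists>z. x < z \<and> z < x + 1 \<and> (x + 1) powr g - x powr g = ((x + 1) - x) * (g * z powr (g - 1))"
    by (rule MVT2) (use assms in \<open>auto intro!: derivative_eq_intros\<close>)
  then obtain z where z: "x < z" "(x + 1) powr g - x powr g = g * z powr (g - 1)" by auto
  have "x powr (g - 1) \<le> z powr (g - 1)" using z assms by (intro powr_mono2) auto
  with assms z show ?thesis by (simp add: algebra_simps)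
qed

lemma add_powr_le:
  fixes u v p :: real
  assumes "u \<ge> 0" "v \<ge> 0" "p > 0"
  shows "(u + v) powr p \<le> 2 powr p * (u powr p + v powr p)"
proof -
  have "(u + v) powr p \<le> (2 * max u v) powr p" using assms by (intro powr_mono2) auto
  also have "\<dots> = 2 powr p * max u v powr p" using assms by (simp add: powr_mult)
  also have "max u v powr p \<le> u powr p + v powr p" by (cases "u \<le> v") (auto simp: max_def)
  then have "2 powr p * max u v powr p \<le> 2 powr p * (u powr p + v powr p)" by simp
  finally show ?thesis .
qed

definition taylor_remainder_const :: "real \<Rightarrow> real" where
  "taylor_remainder_const \<alpha> = \<alpha> * (\<alpha> - 1) / 2 * ((1/2) powr (\<alpha> - 2) + (3/2) powr (\<alpha> - 2))"

lemma taylor_remainder_const_nonneg: "\<alpha> \<ge> 1 \<Longrightarrow> taylor_remainder_const \<alpha> \<ge> 0"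
  unfolding taylor_remainder_const_def by (intro mult_nonneg_nonneg add_nonneg_nonneg) auto

lemma one_add_powr_le:
  fixes \<alpha> t :: real
  assumes "\<alpha> > 1" "\<bar>t\<bar> \<le> 1/2"
  shows "(1 + t) powr \<alpha> \<le> 1 + \<alpha> * t + taylor_remainder_const \<alpha> * t\<^sup>2"
proof (cases "t = 0")
  case False
  define f where "f = (\<lambda>m::nat. if m = 0 then (\<lambda>t::real. (1 + t) powr \<alpha>)
      else if m = 1 then (\<lambda>t. \<alpha> * (1 + t) powr (\<alpha> - 1)) else (\<lambda>t. \<alpha> * (\<alpha> - 1) * (1 + t) powr (\<alpha> - 2)))"
  have f_deriv: "\<forall>m t. m < 2 \<and> -1/2 \<le> t \<and> t \<le> 1/2 \<longrightarrow> DERIV (f m) t :> f (Suc m) t"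
  proof (intro allI impI)
    fix m :: nat and t :: real assume h: "m < 2 \<and> -1/2 \<le> t \<and> t \<le> 1/2"
    then have "1 + t > 0" by simp
    then have "DERIV (\<lambda>t. (1 + t) powr \<alpha>) t :> \<alpha> * (1 + t) powr (\<alpha> - 1)"
      and "DERIV (\<lambda>t. \<alpha> * (1 + t) powr (\<alpha> - 1)) t :> \<alpha> * (\<alpha> - 1) * (1 + t) powr (\<alpha> - 2)"
      by (auto intro!: derivative_eq_intros simp: algebra_simps)
    with h show "DERIV (f m) t :> f (Suc m) t" by (cases m) (auto simp: f_def)
  qed
  have "\<exists>\<xi>. (if t < 0 then t < \<xi> \<and> \<xi> < 0 else 0 < \<xi> \<and> \<xi> < t) \<and>
      f 0 t = (\<Sum>m<2. f m 0 / fact m * (t - 0) ^ m) + f 2 \<xi> / fact 2 * (t - 0) ^ 2"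
    by (rule Taylor[of 2 f "f 0" "-1/2" "1/2" 0 t]) (use f_deriv False assms(2) in auto)
  then obtain \<xi> where \<xi>: "if t < 0 then t < \<xi> \<and> \<xi> < 0 else 0 < \<xi> \<and> \<xi> < t"
    and taylor: "f 0 t = (\<Sum>m<2. f m 0 / fact m * (t - 0) ^ m) + f 2 \<xi> / fact 2 * (t - 0) ^ 2"
    by blast
  have "1/2 \<le> 1 + \<xi>" "1 + \<xi> \<le> 3/2" using \<xi> assms(2) by (auto split: if_splits)
  \<comment> \<open>whatever the sign of \<open>\<alpha> - 2\<close>, one of the two endpoint values dominates\<close>
  then have "(1 + \<xi>) powr (\<alpha> - 2) \<le> (1/2) powr (\<alpha> - 2) + (3/2) powr (\<alpha> - 2)"
  proof (cases "\<alpha> \<ge> 2")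
    case True
    then have "(1 + \<xi>) powr (\<alpha> - 2) \<le> (3/2) powr (\<alpha> - 2)"
      using \<open>1/2 \<le> 1 + \<xi>\<close> \<open>1 + \<xi> \<le> 3/2\<close> by (intro powr_mono2) auto
    then show ?thesis by (simp add: add_increasing)
  next
    case False
    then have "(1 + \<xi>) powr (\<alpha> - 2) \<le> (1/2) powr (\<alpha> - 2)"
      using \<open>1/2 \<le> 1 + \<xi>\<close> by (intro powr_mono2') auto
    then show ?thesis by (simp add: add_increasing2)
  qed
  then have "\<alpha> * (\<alpha> - 1) / 2 * (1 + \<xi>) powr (\<alpha> - 2) * t\<^sup>2 \<le> taylor_remainder_const \<alpha> * t\<^sup>2"
    unfolding taylor_remainder_const_def using assms(1) by (intro mult_right_mono mult_left_mono) auto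
  moreover have "f 0 t = 1 + \<alpha> * t + \<alpha> * (\<alpha> - 1) / 2 * (1 + \<xi>) powr (\<alpha> - 2) * t\<^sup>2"
    using taylor by (simp add: f_def eval_nat_numeral)
  ultimately show ?thesis by (simp add: f_def)
qed simp

definition expansion_const :: "real \<Rightarrow> real" where
  "expansion_const p = 9 powr p + p * 8 powr (p - 1) + p / 2 + 9 * taylor_remainder_const (p / 2)"

lemma expansion_const_pos: "p > 2 \<Longrightarrow> expansion_const p > 0"
  unfolding expansion_const_def using taylor_remainder_const_nonneg[of "p / 2"]
  by (intro add_pos_nonneg add_nonneg_pos) auto

lemma powr_expansion_le_large_increment:
  fixes a b c N p :: real
  assumes p: "p > 2" and ab: "a \<ge> 0" "b \<ge> 0" "\<bar>c\<bar> \<le> a * b" "0 \<le> N" "N \<le> a + b"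
    and large: "a \<le> 8 * b"
  shows "N powr p \<le> a powr p + p * a powr (p - 2) * c + (9 powr p + p * 8 powr (p - 1)) * b powr p"
proof -
  have "N powr p \<le> (9 * b) powr p" using ab large p by (intro powr_mono2) auto
  also have "\<dots> = 9 powr p * b powr p" using ab by (simp add: powr_mult)
  finally have N_le: "N powr p \<le> 9 powr p * b powr p" .
  have "a powr (p - 2) * (- c) \<le> a powr (p - 2) * (a * b)"
    using ab by (intro mult_left_mono) auto
  also have "\<dots> = a powr (p - 1) * b"
    using powr_eq_powr_diff_mult_power[of a "p - 1" 1] ab by (simp add: mult.assoc)
  also have "\<dots> \<le> (8 * b) powr (p - 1) * b" using large ab p by (intro mult_right_mono powr_mono2) auto
  also have "\<dots> = 8 powr (p - 1) * b powr p"
    using powr_eq_powr_diff_mult_power[of b p 1] ab by (simp add: powr_mult)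
  finally have "p * (a powr (p - 2) * (- c)) \<le> p * (8 powr (p - 1) * b powr p)"
    using p by (intro mult_left_mono) auto
  moreover have "p * (a powr (p - 2) * (- c)) = - (p * a powr (p - 2) * c)" by simp
  moreover have "(9 powr p + p * 8 powr (p - 1)) * b powr p = 9 powr p * b powr p + p * (8 powr (p - 1) * b powr p)"
    by (simp add: distrib_right)
  ultimately show ?thesis using N_le powr_ge_zero[of a p] by linarith
qed

lemma powr_expansion_le_small_increment:
  fixes a b c N p :: real
  assumes p: "p > 2" and ab: "a \<ge> 0" "b \<ge> 0" "\<bar>c\<bar> \<le> a * b" "0 \<le> N"
    and N2: "N ^ 2 = a ^ 2 + 2 * c + b ^ 2" and small: "8 * b < a"
  shows "N powr p \<le> a powr p + p * a powr (p - 2) * c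
           + (p / 2 + 9 * taylor_remainder_const (p / 2)) * (a powr (p - 2) * b ^ 2)"
proof -
  define L where "L = taylor_remainder_const (p / 2)"
  define t where "t = (2 * c + b ^ 2) / a ^ 2"
  have a0: "a > 0" using ab small by auto
  have L0: "L \<ge> 0" unfolding L_def using p by (intro taylor_remainder_const_nonneg) auto
  have ct: "\<bar>2 * c + b ^ 2\<bar> \<le> 3 * a * b"
  proof -
    have "b ^ 2 \<le> a * b" using small ab by (simp add: power2_eq_square mult_right_mono)
    then show ?thesis using ab mult_nonneg_nonneg[OF ab(1,2)] zero_le_power2[of b]
      unfolding abs_le_iff by linarith
  qed
  have t_small: "\<bar>t\<bar> \<le> 1/2"
  proof -
    have "\<bar>t\<bar> = \<bar>2 * c + b ^ 2\<bar> / a ^ 2" unfolding t_def by (simp add: abs_divide)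
    also have "\<dots> \<le> 3 * a * b / a ^ 2" by (rule divide_right_mono) (use ct in auto)
    also have "\<dots> = 3 * b / a" using a0 by (simp add: power2_eq_square)
    also have "\<dots> \<le> 1/2" using small a0 by (simp add: field_simps)
    finally show ?thesis .
  qed
  have t2: "a ^ 2 * t ^ 2 \<le> 9 * b ^ 2"
  proof -
    have "a ^ 2 * t ^ 2 = (2 * c + b ^ 2) ^ 2 / a ^ 2"
      unfolding t_def using a0 by (simp add: power2_eq_square field_simps)
    also have "\<dots> \<le> (3 * a * b) ^ 2 / a ^ 2"
      using power_mono[OF ct, of 2] by (intro divide_right_mono) auto
    also have "\<dots> = 9 * b ^ 2" using a0 by (simp add: power2_eq_square)
    finally show ?thesis .
  qed
  have "N powr p = (N ^ 2) powr (p / 2)" using powr_power2_half[of N p] ab by simp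
  also have "N ^ 2 = a ^ 2 * (1 + t)" unfolding t_def using N2 a0 by (simp add: field_simps)
  also have "(a ^ 2 * (1 + t)) powr (p / 2) = a powr p * (1 + t) powr (p / 2)"
    using t_small powr_power2_half[of a p] a0 by (simp add: powr_mult)
  also have "\<dots> \<le> a powr p * (1 + (p / 2) * t + L * t ^ 2)"
    unfolding L_def using one_add_powr_le[of "p / 2" t] p t_small by (intro mult_left_mono) auto
  also have "\<dots> = a powr p + (p / 2) * (a powr (p - 2) * (a ^ 2 * t)) + L * a powr (p - 2) * (a ^ 2 * t ^ 2)"
    using powr_eq_powr_diff_mult_power[of a p 2] a0 by (simp add: distrib_left mult_ac)
  also have "a ^ 2 * t = 2 * c + b ^ 2" unfolding t_def using a0 by simp
  also have "L * a powr (p - 2) * (a ^ 2 * t ^ 2) \<le> L * a powr (p - 2) * (9 * b ^ 2)"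
    using t2 L0 by (intro mult_left_mono) auto
  finally show ?thesis unfolding L_def by (simp add: distrib_left distrib_right mult_ac)
qed

lemma powr_expansion_le:
  fixes a b c N p :: real
  assumes p: "p > 2" and ab: "a \<ge> 0" "b \<ge> 0" "\<bar>c\<bar> \<le> a * b" "0 \<le> N"
    and N2: "N ^ 2 = a ^ 2 + 2 * c + b ^ 2"
  shows "N powr p \<le> a powr p + p * a powr (p - 2) * c + expansion_const p * (a powr (p - 2) * b ^ 2 + b powr p)"
proof -
  define L where "L = taylor_remainder_const (p / 2)"
  have L0: "L \<ge> 0" unfolding L_def using p by (intro taylor_remainder_const_nonneg) auto
  have K: "expansion_const p = (9 powr p + p * 8 powr (p - 1)) + (p / 2 + 9 * L)"
    unfolding expansion_const_def L_def by simp
  have nonneg: "9 powr p + p * 8 powr (p - 1) \<ge> 0" "p / 2 + 9 * L \<ge> 0" "a powr (p - 2) * b ^ 2 \<ge> 0"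
    using p L0 by auto
  show ?thesis
  proof (cases "a \<le> 8 * b")
    case True
    have "c \<le> a * b" using ab(3) by linarith
    then have "N ^ 2 \<le> (a + b) ^ 2" using N2 by (simp add: power2_sum)
    then have "N \<le> a + b" using power2_le_imp_le[of N "a + b"] ab by auto
    then have "N powr p \<le> a powr p + p * a powr (p - 2) * c + (9 powr p + p * 8 powr (p - 1)) * b powr p"
      using powr_expansion_le_large_increment[OF p ab] True by blast
    moreover have "(9 powr p + p * 8 powr (p - 1)) * b powr p
        \<le> expansion_const p * (a powr (p - 2) * b ^ 2 + b powr p)"
      unfolding K using nonneg by (intro mult_mono) auto
    ultimately show ?thesis by linarith
  next
    case False
    then have "N powr p \<le> a powr p + p * a powr (p - 2) * c + (p / 2 + 9 * L) * (a powr (p - 2) * b ^ 2)"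
      unfolding L_def using powr_expansion_le_small_increment[OF p ab N2] by simp
    moreover have "(p / 2 + 9 * L) * (a powr (p - 2) * b ^ 2)
        \<le> expansion_const p * (a powr (p - 2) * b ^ 2 + b powr p)"
      unfolding K using nonneg by (intro mult_mono) auto
    ultimately show ?thesis by linarith
  qed
qed

lemma norm_add_powr_le:
  fixes x h :: "'a::real_inner"
  assumes "p > 2"
  shows "norm (x + h) powr p \<le> norm x powr p + p * norm x powr (p - 2) * (x \<bullet> h)
           + expansion_const p * (norm x powr (p - 2) * norm h ^ 2 + norm h powr p)"
proof (rule powr_expansion_le[OF assms])
  show "\<bar>x \<bullet> h\<bar> \<le> norm x * norm h" by (rule Cauchy_Schwarz_ineq2)
  show "norm (x + h) ^ 2 = norm x ^ 2 + 2 * (x \<bullet> h) + norm h ^ 2"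
    by (simp add: power2_norm_eq_inner inner_add inner_commute)
qed auto

definition growth_const :: "real \<Rightarrow> real \<Rightarrow> real \<Rightarrow> real" where
  "growth_const g A B = 2 * (A * (2 * A / g) powr (g - 1) + B) / g"

lemma growth_const_nonneg: "g > 0 \<Longrightarrow> A \<ge> 0 \<Longrightarrow> B \<ge> 0 \<Longrightarrow> growth_const g A B \<ge> 0"
  unfolding growth_const_def by simp

text \<open>In the application \<open>b / s + s powr (g - 1) * \<mu>\<close> bounds the \<open>(p - 2)\<close>-th moment for every
  \<open>s > 0\<close>; choosing \<open>s = l x\<close> makes both error terms \<open>O(x powr (g - 1))\<close>, which
  \<open>(x + 1) powr g - x powr g \<ge> g * x powr (g - 1)\<close> absorbs.\<close>
lemma growth_const_step:
  fixes g A B \<mu> x b b' :: real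
  defines "l \<equiv> 2 * A / g" and "C \<equiv> growth_const g A B"
  assumes g: "g > 1" and A: "A > 0" and B: "B \<ge> 0" and \<mu>: "\<mu> \<ge> 0" and x: "x \<ge> 1"
    and b: "b \<le> C * x powr g * \<mu>"
    and b': "b' \<le> b + A * (b / (l * x) + (l * x) powr (g - 1) * \<mu>) + B * \<mu>"
  shows "b' \<le> C * (x + 1) powr g * \<mu>"
proof -
  have l0: "l > 0" unfolding l_def using A g by auto
  have C0: "C \<ge> 0" unfolding C_def using A B g by (intro growth_const_nonneg) auto
  have C_eq: "A * l powr (g - 1) + B = g / 2 * C" unfolding C_def growth_const_def l_def using g by simp
  have x_pow: "x powr g = x powr (g - 1) * x" using powr_eq_powr_diff_mult_power[of x g 1] x by simp
  have x_pow_ge: "x powr (g - 1) \<ge> 1" using x g by (simp add: ge_one_powr_ge_zero)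
  have "A * (b / (l * x)) \<le> A / l * (C * x powr g * \<mu>) / x"
    using b A l0 x by (simp add: divide_right_mono mult_left_mono)
  also have "\<dots> = g / 2 * C * x powr (g - 1) * \<mu>" unfolding x_pow l_def using x A g by (simp add: field_simps)
  finally have err1: "A * (b / (l * x)) \<le> g / 2 * C * x powr (g - 1) * \<mu>" .
  have "A * ((l * x) powr (g - 1) * \<mu>) + B * \<mu> \<le> (A * l powr (g - 1) + B) * x powr (g - 1) * \<mu>"
    using l0 x B \<mu> x_pow_ge mult_left_mono[OF x_pow_ge, of "B * \<mu>"]
    by (simp add: powr_mult algebra_simps)
  then have err2: "A * ((l * x) powr (g - 1) * \<mu>) + B * \<mu> \<le> g / 2 * C * x powr (g - 1) * \<mu>"
    unfolding C_eq .
  have "b' \<le> b + A * (b / (l * x)) + (A * ((l * x) powr (g - 1) * \<mu>) + B * \<mu>)"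
    using b' by (simp add: distrib_left add.assoc)
  then have "b' \<le> C * x powr g * \<mu> + g / 2 * C * x powr (g - 1) * \<mu> + g / 2 * C * x powr (g - 1) * \<mu>"
    using b err1 err2 by linarith
  also have "\<dots> = C * \<mu> * (x powr g + g * x powr (g - 1))" by (simp add: algebra_simps)
  also have "\<dots> \<le> C * \<mu> * (x + 1) powr g"
    using C0 \<mu> x g by (intro mult_left_mono powr_add_mult_powr_le_add_one_powr) auto
  finally show ?thesis by (simp add: mult_ac)
qed

lemma not_less_first_time:
  assumes "first_time P > enat n" "m \<le> n"
  shows "\<not> P m"
proof
  assume "P m"
  then have "first_time P \<le> enat m" unfolding first_time_def by (auto intro: Least_le)
  with assms have "enat n < enat m" by (meson less_le_trans)
  with assms show False by simp
qed

lemma first_time_less_first_time: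
  assumes "first_time P > first_time Q"
  obtains j where "Q j" "\<And>i. i \<le> j \<Longrightarrow> \<not> P i"
proof -
  have "\<exists>j. Q j" using assms unfolding first_time_def by (auto split: if_splits)
  then have "first_time Q = enat (LEAST j. Q j)" "Q (LEAST j. Q j)"
    unfolding first_time_def by (auto intro: LeastI_ex)
  with assms show ?thesis using not_less_first_time[where P = P] that by metis
qed

lemma powr_le_of_less_add3:
  fixes N a u w r p :: real
  assumes "0 < a" "a \<le> u" "w \<ge> 0" "N \<ge> 0" "N < a + u + w" "0 < r" "r < p"
  shows "N powr r \<le> 3 powr r * (u powr r + a powr (r - p) * w powr p)"
proof (cases "w \<le> u")
  case True
  then have "N powr r \<le> (3 * u) powr r" using assms by (intro powr_mono2) auto
  also have "\<dots> = 3 powr r * u powr r" using assms by (simp add: powr_mult)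
  moreover have "0 \<le> 3 powr r * (a powr (r - p) * w powr p)" by simp
  ultimately show ?thesis unfolding distrib_left by linarith
next
  case False
  then have "N powr r \<le> (3 * w) powr r" using assms by (intro powr_mono2) auto
  also have "\<dots> = 3 powr r * (w powr (r - p) * w powr p)" using assms by (simp add: powr_mult powr_add[symmetric])
  also have "\<dots> \<le> 3 powr r * (a powr (r - p) * w powr p)"
    using assms False by (intro mult_left_mono mult_right_mono powr_mono2') auto
  also have "\<dots> \<le> 3 powr r * (u powr r + a powr (r - p) * w powr p)" by (intro mult_left_mono) auto
  finally show ?thesis .
qed

section \<open>Martingales with bounded conditional increment moments\<close>

locale martingale_bounded_increments =
  fixes M :: "'w measure" and F :: "nat \<Rightarrow> 'w measure" and X :: "nat \<Rightarrow> 'w \<Rightarrow> 'a::euclidean_space"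
    and p \<nu> :: real
  assumes prob: "prob_space M" and mart: "martingale M F X" and p_gt_2: "p > 2"
    and initial_moment_finite: "(\<integral>\<^sup>+ x. ennreal (norm (X 0 x) powr p) \<partial>M) < \<infinity>"
    and increment_bound:
      "\<And>n. AE x in M. nn_cond_exp M (F n) (\<lambda>y. ennreal (norm (X (Suc n) y - X n y) powr p)) x \<le> ennreal \<nu>"
begin

sublocale prob_space M by (rule prob)

lemma filtration_F: "filtration M F" using mart unfolding martingale_def by auto

lemma subalgebra_F: "subalgebra M (F n)" using filtration_F unfolding filtration_def by auto

lemma space_F: "space (F n) = space M" using subalgebra_F[of n] unfolding subalgebra_def by auto

lemma sets_F_imp_M: "A \<in> sets (F n) \<Longrightarrow> A \<in> sets M"
  using subalgebra_F[of n] unfolding subalgebra_def by auto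

lemma sets_F_mono: "k \<le> m \<Longrightarrow> sets (F k) \<subseteq> sets (F m)"
proof (induction m rule: dec_induct)
  case (step m) then show ?case using filtration_F unfolding filtration_def by blast
qed simp

lemma sigma_finite_subalgebra_F: "sigma_finite_subalgebra M (F n)"
proof -
  have "finite_measure_subalgebra M (F n)" by unfold_locales (rule subalgebra_F)
  then show ?thesis by (rule finite_measure_subalgebra_is_sigma_finite)
qed

lemma measurable_F_imp_M: "f \<in> borel_measurable (F n) \<Longrightarrow> f \<in> borel_measurable M"
  using measurable_from_subalg[OF subalgebra_F] by blast

lemma X_measurable_F: "k \<le> m \<Longrightarrow> X k \<in> borel_measurable (F m)"
proof -
  assume "k \<le> m"
  then have "subalgebra (F m) (F k)" unfolding subalgebra_def using sets_F_mono space_F by auto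
  moreover have "X k \<in> borel_measurable (F k)" using mart unfolding martingale_def by auto
  ultimately show ?thesis using measurable_from_subalg by blast
qed

lemma X_measurable[measurable]: "X n \<in> borel_measurable M"
  using measurable_F_imp_M[OF X_measurable_F] by blast

lemma integrable_X: "integrable M (X n)" using mart unfolding martingale_def by auto

text \<open>\<open>ennreal \<nu> = 0\<close> for negative \<open>\<nu>\<close>, so the usable real bound is \<open>max \<nu> 0\<close>.\<close>
definition nu :: real where "nu = max \<nu> 0"

lemma nu_nonneg: "nu \<ge> 0" and le_nu: "\<nu> \<le> nu" unfolding nu_def by auto

lemma nn_integral_mult_increment_le:
  assumes g: "g \<in> borel_measurable (F n)"
  shows "(\<integral>\<^sup>+ x. g x * ennreal (norm (X (Suc n) x - X n x) powr p) \<partial>M) \<le> ennreal \<nu> * (\<integral>\<^sup>+ x. g x \<partial>M)"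
proof -
  interpret S: sigma_finite_subalgebra M "F n" by (rule sigma_finite_subalgebra_F)
  have [measurable]: "g \<in> borel_measurable M" by (rule measurable_F_imp_M[OF g])
  have "(\<integral>\<^sup>+ x. g x * ennreal (norm (X (Suc n) x - X n x) powr p) \<partial>M)
       = (\<integral>\<^sup>+ x. g x * nn_cond_exp M (F n) (\<lambda>y. ennreal (norm (X (Suc n) y - X n y) powr p)) x \<partial>M)"
    by (rule S.nn_cond_exp_intg[symmetric]) (use g in auto)
  also have "\<dots> \<le> (\<integral>\<^sup>+ x. g x * ennreal \<nu> \<partial>M)"
    by (rule nn_integral_mono_AE)
      (use increment_bound[of n] in \<open>auto elim!: eventually_mono intro: mult_left_mono\<close>)
  also have "\<dots> = ennreal \<nu> * (\<integral>\<^sup>+ x. g x \<partial>M)"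
    by (simp add: nn_integral_cmult mult.commute)
  finally show ?thesis .
qed

lemma integral_mult_increment_le:
  assumes g: "g \<in> borel_measurable (F n)" and g0: "\<And>x. g x \<ge> 0" and gi: "integrable M g"
  shows "integrable M (\<lambda>x. g x * norm (X (Suc n) x - X n x) powr p)"
    and "(\<integral>x. g x * norm (X (Suc n) x - X n x) powr p \<partial>M) \<le> nu * (\<integral>x. g x \<partial>M)"
proof -
  have [measurable]: "g \<in> borel_measurable M" by (rule measurable_F_imp_M[OF g])
  have g_F: "(\<lambda>x. ennreal (g x)) \<in> borel_measurable (F n)" using g by measurable
  have int_g: "0 \<le> (\<integral>x. g x \<partial>M)" using g0 by (intro integral_nonneg_AE) auto
  have "(\<integral>\<^sup>+ x. ennreal (g x * norm (X (Suc n) x - X n x) powr p) \<partial>M)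
      = (\<integral>\<^sup>+ x. ennreal (g x) * ennreal (norm (X (Suc n) x - X n x) powr p) \<partial>M)"
    using g0 by (simp add: ennreal_mult)
  also have "\<dots> \<le> ennreal \<nu> * (\<integral>\<^sup>+ x. ennreal (g x) \<partial>M)" by (rule nn_integral_mult_increment_le[OF g_F])
  also have "(\<integral>\<^sup>+ x. ennreal (g x) \<partial>M) = ennreal (\<integral>x. g x \<partial>M)"
    by (rule nn_integral_eq_integral) (use gi g0 in auto)
  also have "ennreal \<nu> * ennreal (\<integral>x. g x \<partial>M) \<le> ennreal nu * ennreal (\<integral>x. g x \<partial>M)"
    using le_nu by (intro mult_right_mono ennreal_leI) auto
  also have "\<dots> = ennreal (nu * (\<integral>x. g x \<partial>M))" using nu_nonneg int_g by (simp add: ennreal_mult)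
  finally have le: "(\<integral>\<^sup>+ x. ennreal (g x * norm (X (Suc n) x - X n x) powr p) \<partial>M) \<le> ennreal (nu * (\<integral>x. g x \<partial>M))" .
  show int: "integrable M (\<lambda>x. g x * norm (X (Suc n) x - X n x) powr p)"
    by (rule integrableI_nonneg) (use le g0 in \<open>auto simp: top.not_eq_extremum intro: le_less_trans\<close>)
  show "(\<integral>x. g x * norm (X (Suc n) x - X n x) powr p \<partial>M) \<le> nu * (\<integral>x. g x \<partial>M)"
    using le nu_nonneg int_g g0 by (subst (asm) nn_integral_eq_integral[OF int]) (auto simp: ennreal_le_iff)
qed

lemma integral_mult_increment_component_zero:
  assumes [measurable]: "Y \<in> borel_measurable (F n)" and b: "b \<in> Basis"
    and int: "integrable M (\<lambda>x. Y x * ((X (Suc n) x - X n x) \<bullet> b))"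
  shows "(\<integral>x. Y x * ((X (Suc n) x - X n x) \<bullet> b) \<partial>M) = 0"
proof -
  interpret S: sigma_finite_subalgebra M "F n" by (rule sigma_finite_subalgebra_F)
  have int_X: "integrable M (\<lambda>x. X (Suc n) x \<bullet> b)" "integrable M (\<lambda>x. X n x \<bullet> b)"
    using integrable_X by auto
  have "AE x in M. real_cond_exp M (F n) (\<lambda>x. X (Suc n) x \<bullet> b) x = X n x \<bullet> b"
    using mart b unfolding martingale_def by auto
  moreover have "AE x in M. real_cond_exp M (F n) (\<lambda>x. X n x \<bullet> b) x = X n x \<bullet> b"
    using int_X X_measurable_F[of n n] by (intro S.real_cond_exp_F_meas) auto
  moreover have "AE x in M. real_cond_exp M (F n) (\<lambda>x. X (Suc n) x \<bullet> b - X n x \<bullet> b) x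
      = real_cond_exp M (F n) (\<lambda>x. X (Suc n) x \<bullet> b) x - real_cond_exp M (F n) (\<lambda>x. X n x \<bullet> b) x"
    using int_X by (intro S.real_cond_exp_diff) auto
  ultimately have cond_exp_0: "AE x in M. real_cond_exp M (F n) (\<lambda>x. (X (Suc n) x - X n x) \<bullet> b) x = 0"
    by eventually_elim (simp add: inner_diff_left)
  have [measurable]: "Y \<in> borel_measurable M" by (rule measurable_F_imp_M) measurable
  have "(\<integral>x. Y x * ((X (Suc n) x - X n x) \<bullet> b) \<partial>M)
      = (\<integral>x. Y x * real_cond_exp M (F n) (\<lambda>x. (X (Suc n) x - X n x) \<bullet> b) x \<partial>M)"
    by (rule S.real_cond_exp_intg(2)[symmetric]) (use int in auto)
  also have "\<dots> = 0"
    using cond_exp_0 by (subst integral_cong_AE[where g = "\<lambda>_. 0"]) (auto elim!: eventually_mono)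
  finally show ?thesis .
qed

lemma integral_mult_increment_square_le:
  assumes W: "W \<in> borel_measurable (F n)" and W0: "\<And>x. W x \<ge> 0" and iW: "integrable M W"
  shows "integrable M (\<lambda>x. W x * norm (X (Suc n) x - X n x) ^ 2)"
    and "(\<integral>x. W x * norm (X (Suc n) x - X n x) ^ 2 \<partial>M) \<le> (1 + nu) * (\<integral>x. W x \<partial>M)"
proof -
  define D where "D x = norm (X (Suc n) x - X n x) powr p" for x
  have [measurable]: "W \<in> borel_measurable M" by (rule measurable_F_imp_M[OF W])
  have iWD: "integrable M (\<lambda>x. W x * D x)" and WD_le: "(\<integral>x. W x * D x \<partial>M) \<le> nu * (\<integral>x. W x \<partial>M)"
    using integral_mult_increment_le[OF W W0 iW] unfolding D_def by auto
  have le: "W x * norm (X (Suc n) x - X n x) ^ 2 \<le> W x + W x * D x" for x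
    using mult_left_mono[OF power2_le_one_add_powr W0, of "norm (X (Suc n) x - X n x)" p x] p_gt_2
    unfolding D_def by (simp add: distrib_left)
  show int: "integrable M (\<lambda>x. W x * norm (X (Suc n) x - X n x) ^ 2)"
    by (rule Bochner_Integration.integrable_bound[where f = "\<lambda>x. W x + W x * D x"])
      (use iW iWD le W0 in \<open>auto intro!: AE_I2 simp: D_def\<close>)
  have "(\<integral>x. W x * norm (X (Suc n) x - X n x) ^ 2 \<partial>M) \<le> (\<integral>x. W x + W x * D x \<partial>M)"
    by (rule integral_mono) (use int iW iWD le in auto)
  also have "\<dots> = (\<integral>x. W x \<partial>M) + (\<integral>x. W x * D x \<partial>M)" using iW iWD by simp
  finally show "(\<integral>x. W x * norm (X (Suc n) x - X n x) ^ 2 \<partial>M) \<le> (1 + nu) * (\<integral>x. W x \<partial>M)"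
    using WD_le by (simp add: algebra_simps)
qed

lemma integral_mult_inner_increment_zero:
  assumes W: "W \<in> borel_measurable (F n)" and W0: "\<And>x. W x \<ge> 0" and Z: "Z \<in> borel_measurable (F n)"
    and int: "integrable M (\<lambda>x. W x * (norm (Z x) * norm (X (Suc n) x - X n x)))"
  shows "integrable M (\<lambda>x. W x * (Z x \<bullet> (X (Suc n) x - X n x)))"
    and "(\<integral>x. W x * (Z x \<bullet> (X (Suc n) x - X n x)) \<partial>M) = 0"
proof -
  define h where "h x = X (Suc n) x - X n x" for x
  have [measurable]: "W \<in> borel_measurable M" "Z \<in> borel_measurable M" "h \<in> borel_measurable M"
    using measurable_F_imp_M W Z unfolding h_def by auto
  have bound: "\<bar>W x * c\<bar> \<le> \<bar>W x * (norm (Z x) * norm (h x))\<bar>" if "\<bar>c\<bar> \<le> norm (Z x) * norm (h x)" for x c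
    using mult_left_mono[OF that W0] W0[of x] by (simp add: abs_mult)
  show "integrable M (\<lambda>x. W x * (Z x \<bullet> (X (Suc n) x - X n x)))"
    using int bound[OF Cauchy_Schwarz_ineq2]
    unfolding h_def by (intro Bochner_Integration.integrable_bound[OF int]) (auto intro!: AE_I2)
  have int_b: "integrable M (\<lambda>x. (W x * (Z x \<bullet> b)) * (h x \<bullet> b))" if b: "b \<in> Basis" for b
  proof -
    have "\<bar>(Z x \<bullet> b) * (h x \<bullet> b)\<bar> \<le> norm (Z x) * norm (h x)" for x
      using Basis_le_norm[OF b] by (simp add: abs_mult mult_mono)
    then show ?thesis
      using int bound unfolding h_def
      by (intro Bochner_Integration.integrable_bound[OF int]) (auto intro!: AE_I2 simp: mult.assoc)
  qed
  have "(\<integral>x. W x * (Z x \<bullet> h x) \<partial>M) = (\<integral>x. (\<Sum>b\<in>Basis. (W x * (Z x \<bullet> b)) * (h x \<bullet> b)) \<partial>M)"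
    by (simp add: euclidean_inner[of "Z _" "h _"] sum_distrib_left mult.assoc)
  also have "\<dots> = (\<Sum>b\<in>Basis. \<integral>x. (W x * (Z x \<bullet> b)) * (h x \<bullet> b) \<partial>M)"
    using int_b by (intro Bochner_Integration.integral_sum) auto
  also have "\<dots> = 0"
  proof (intro sum.neutral ballI)
    fix b :: 'a assume b: "b \<in> Basis"
    have "(\<lambda>x. W x * (Z x \<bullet> b)) \<in> borel_measurable (F n)" using W Z by measurable
    from integral_mult_increment_component_zero[OF this b] int_b[OF b]
    show "(\<integral>x. (W x * (Z x \<bullet> b)) * (h x \<bullet> b) \<partial>M) = 0" unfolding h_def by simp
  qed
  finally show "(\<integral>x. W x * (Z x \<bullet> (X (Suc n) x - X n x)) \<partial>M) = 0" unfolding h_def .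
qed

lemma indicator_norm_powr_minus_two:
  assumes E: "E \<in> sets M" and [measurable]: "Z \<in> borel_measurable M"
    and int: "integrable M (\<lambda>x. indicator E x * norm (Z x :: 'a) powr p)" and s: "s > 0"
  shows "integrable M (\<lambda>x. indicator E x * norm (Z x) powr (p - 2))"
    and "(\<integral>x. indicator E x * norm (Z x) powr (p - 2) \<partial>M)
        \<le> (\<integral>x. indicator E x * norm (Z x) powr p \<partial>M) / s + s powr (p / 2 - 1) * measure M E"
proof -
  define Y where "Y x = indicator E x * norm (Z x) powr p / s + s powr ((p - 2) / 2) * indicator E x" for x
  have iY: "integrable M Y" unfolding Y_def using int E by (auto simp: less_top[symmetric])
  have le: "indicator E x * norm (Z x) powr (p - 2) \<le> Y x" for x
    unfolding Y_def using powr_minus_two_le[of "norm (Z x)" s p] s p_gt_2 by (auto simp: indicator_def)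
  show int2: "integrable M (\<lambda>x. indicator E x * norm (Z x) powr (p - 2))"
  proof (rule Bochner_Integration.integrable_bound[OF iY])
    show "AE x in M. norm (indicator E x * norm (Z x) powr (p - 2)) \<le> norm (Y x)"
      using le by (intro AE_I2) (auto intro: order_trans[OF _ abs_ge_self] simp: abs_mult)
  qed (use E in measurable)
  have "(\<integral>x. indicator E x * norm (Z x) powr (p - 2) \<partial>M) \<le> (\<integral>x. Y x \<partial>M)"
    using int2 iY le by (intro integral_mono) auto
  also have "\<dots> = (\<integral>x. indicator E x * norm (Z x) powr p \<partial>M) / s + s powr (p / 2 - 1) * measure M E"
    unfolding Y_def using int E by (simp add: less_top[symmetric] diff_divide_distrib)
  finally show "(\<integral>x. indicator E x * norm (Z x) powr (p - 2) \<partial>M)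
      \<le> (\<integral>x. indicator E x * norm (Z x) powr p \<partial>M) / s + s powr (p / 2 - 1) * measure M E" .
qed

lemma integrable_indicator_norm_powr_minus_two_mult:
  assumes E: "E \<in> sets M" and [measurable]: "Z \<in> borel_measurable M" "h \<in> borel_measurable M"
    and iZ: "integrable M (\<lambda>x. indicator E x * norm (Z x :: 'a) powr p)"
    and ih: "integrable M (\<lambda>x. indicator E x * norm (h x :: 'a) powr p)"
  shows "integrable M (\<lambda>x. indicator E x * norm (Z x) powr (p - 2) * (norm (Z x) * norm (h x)))"
proof (rule Bochner_Integration.integrable_bound)
  show "integrable M (\<lambda>x. indicator E x * norm (Z x) powr p + indicator E x * norm (h x) powr p)"
    using iZ ih by auto
  have "norm (Z x) powr (p - 2) * (norm (Z x) * norm (h x))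
      = norm (Z x) powr (p - 1) * norm (h x) powr (p - (p - 1))" for x
    using powr_eq_powr_diff_mult_power[of "norm (Z x)" "p - 1" 1] by (simp add: mult_ac)
  also have "\<dots> x \<le> norm (Z x) powr p + norm (h x) powr p" for x
    using p_gt_2 by (intro powr_mult_powr_le_add) auto
  finally show "AE x in M. norm (indicator E x * norm (Z x) powr (p - 2) * (norm (Z x) * norm (h x)))
      \<le> norm (indicator E x * norm (Z x) powr p + indicator E x * norm (h x) powr p)"
    by (intro AE_I2) (auto simp: indicator_def)
qed (use E in measurable)

lemma integral_indicator_norm_add_increment_powr_le:
  assumes E: "E \<in> sets (F n)" and Z: "Z \<in> borel_measurable (F n)"
    and int_Z: "integrable M (\<lambda>x. indicator E x * norm (Z x) powr p)"
  shows "integrable M (\<lambda>x. indicator E x * norm (Z x + (X (Suc n) x - X n x)) powr p)"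
    and "(\<integral>x. indicator E x * norm (Z x + (X (Suc n) x - X n x)) powr p \<partial>M)
        \<le> (\<integral>x. indicator E x * norm (Z x) powr p \<partial>M)
           + expansion_const p * (1 + nu) * (\<integral>x. indicator E x * norm (Z x) powr (p - 2) \<partial>M)
           + expansion_const p * nu * measure M E"
proof -
  define K where "K = expansion_const p"
  define h where "h x = X (Suc n) x - X n x" for x
  define G where "G x = (indicator E x :: real)" for x
  define W where "W x = G x * norm (Z x) powr (p - 2)" for x
  define D where "D x = norm (h x) powr p" for x
  have K0: "K > 0" unfolding K_def using p_gt_2 by (rule expansion_const_pos)
  have E_M: "E \<in> sets M" using sets_F_imp_M[OF E] .
  have [measurable]: "Z \<in> borel_measurable M" "h \<in> borel_measurable M" "G \<in> borel_measurable M"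
    using measurable_F_imp_M[OF Z] E_M unfolding h_def G_def by auto
  have G_F: "G \<in> borel_measurable (F n)" and W_F: "W \<in> borel_measurable (F n)"
    unfolding W_def G_def using E Z by measurable
  have G01: "G x = 0 \<or> G x = 1" and G0: "G x \<ge> 0" and W0: "W x \<ge> 0" for x
    unfolding W_def G_def by (auto simp: indicator_def)
  have iG: "integrable M G" unfolding G_def using E_M by (auto simp: less_top[symmetric])
  have iZ: "integrable M (\<lambda>x. G x * norm (Z x) powr p)" using int_Z unfolding G_def .
  have iW: "integrable M W"
    using indicator_norm_powr_minus_two(1)[OF E_M _ int_Z zero_less_one] unfolding W_def G_def by simp
  have iD: "integrable M (\<lambda>x. G x * D x)" and D_le: "(\<integral>x. G x * D x \<partial>M) \<le> nu * measure M E"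
    using integral_mult_increment_le[OF G_F G0 iG] E_M unfolding D_def h_def G_def by auto
  have iWh2: "integrable M (\<lambda>x. W x * norm (h x) ^ 2)"
    and Wh2_le: "(\<integral>x. W x * norm (h x) ^ 2 \<partial>M) \<le> (1 + nu) * (\<integral>x. W x \<partial>M)"
    using integral_mult_increment_square_le[OF W_F W0 iW] unfolding h_def by auto
  have "integrable M (\<lambda>x. W x * (norm (Z x) * norm (h x)))"
    using integrable_indicator_norm_powr_minus_two_mult[OF E_M _ _ int_Z] iD
    unfolding W_def G_def D_def by simp
  then have iC: "integrable M (\<lambda>x. W x * (Z x \<bullet> h x))" and cross: "(\<integral>x. W x * (Z x \<bullet> h x) \<partial>M) = 0"
    using integral_mult_inner_increment_zero[OF W_F W0 Z] unfolding h_def by auto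
  define R where "R x = G x * norm (Z x) powr p + p * (W x * (Z x \<bullet> h x)) + K * (W x * norm (h x) ^ 2 + G x * D x)" for x
  have pointwise: "G x * norm (Z x + h x) powr p \<le> R x" for x
    using G01[of x] norm_add_powr_le[OF p_gt_2, of "Z x" "h x"]
    unfolding R_def W_def D_def K_def by (auto simp: mult_ac)
  have iR: "integrable M R" unfolding R_def using iZ iC iWh2 iD by auto
  show int: "integrable M (\<lambda>x. indicator E x * norm (Z x + (X (Suc n) x - X n x)) powr p)"
    unfolding G_def[symmetric] h_def[symmetric]
    by (rule Bochner_Integration.integrable_bound[OF iR]) (use pointwise G0 in \<open>auto intro!: AE_I2 order_trans[OF _ abs_ge_self]\<close>)
  have "(\<integral>x. G x * norm (Z x + h x) powr p \<partial>M) \<le> (\<integral>x. R x \<partial>M)"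
    using int iR pointwise unfolding G_def h_def by (intro integral_mono) auto
  also have "(\<integral>x. R x \<partial>M) = (\<integral>x. G x * norm (Z x) powr p \<partial>M) + p * (\<integral>x. W x * (Z x \<bullet> h x) \<partial>M)
       + K * ((\<integral>x. W x * norm (h x) ^ 2 \<partial>M) + (\<integral>x. G x * D x \<partial>M))"
    unfolding R_def using iZ iC iWh2 iD by simp
  also have "\<dots> \<le> (\<integral>x. G x * norm (Z x) powr p \<partial>M) + K * ((1 + nu) * (\<integral>x. W x \<partial>M) + nu * measure M E)"
    unfolding cross using Wh2_le D_le K0 by (simp add: mult_left_mono add_mono)
  finally show "(\<integral>x. indicator E x * norm (Z x + (X (Suc n) x - X n x)) powr p \<partial>M)
        \<le> (\<integral>x. indicator E x * norm (Z x) powr p \<partial>M)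
           + expansion_const p * (1 + nu) * (\<integral>x. indicator E x * norm (Z x) powr (p - 2) \<partial>M)
           + expansion_const p * nu * measure M E"
    unfolding G_def h_def W_def K_def by (simp add: algebra_simps)
qed

definition moment_growth_const :: real where
  "moment_growth_const = growth_const (p / 2) (expansion_const p * (1 + nu)) (expansion_const p * nu)"

lemma moment_growth_const_nonneg: "moment_growth_const \<ge> 0"
  unfolding moment_growth_const_def
  using expansion_const_pos[OF p_gt_2] nu_nonneg p_gt_2 by (intro growth_const_nonneg) auto

lemma increment_moment_growth:
  assumes E: "E \<in> sets (F k)"
  shows "integrable M (\<lambda>x. indicator E x * norm (X (k + m) x - X k x) powr p)
     \<and> (\<integral>x. indicator E x * norm (X (k + m) x - X k x) powr p \<partial>M)
         \<le> moment_growth_const * (real m + 1) powr (p / 2) * measure M E"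
proof (induction m)
  case 0
  then show ?case using moment_growth_const_nonneg by simp
next
  case (Suc m)
  define A where "A = expansion_const p * (1 + nu)"
  define B where "B = expansion_const p * nu"
  define s where "s = 2 * A / (p / 2) * (real m + 1)"
  define Z where "Z x = X (k + m) x - X k x" for x
  define b where "b = (\<integral>x. indicator E x * norm (Z x) powr p \<partial>M)"
  define b' where "b' = (\<integral>x. indicator E x * norm (X (k + Suc m) x - X k x) powr p \<partial>M)"
  define I where "I = (\<integral>x. indicator E x * norm (Z x) powr (p - 2) \<partial>M)"
  have A0: "A > 0" unfolding A_def using expansion_const_pos[OF p_gt_2] nu_nonneg by simp
  have s0: "s > 0" unfolding s_def using A0 p_gt_2 by auto
  have E_M: "E \<in> sets M" using sets_F_imp_M[OF E] .
  have E_F: "E \<in> sets (F (k + m))" using sets_F_mono[of k "k + m"] E by auto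
  have Z_F: "Z \<in> borel_measurable (F (k + m))"
    unfolding Z_def using X_measurable_F[of "k + m" "k + m"] X_measurable_F[of k "k + m"] by measurable
  have iZ: "integrable M (\<lambda>x. indicator E x * norm (Z x) powr p)"
    and b_le: "b \<le> moment_growth_const * (real m + 1) powr (p / 2) * measure M E"
    using Suc.IH unfolding b_def Z_def by auto
  have step_eq: "Z x + (X (Suc (k + m)) x - X (k + m) x) = X (k + Suc m) x - X k x" for x
    unfolding Z_def by simp
  note step = integral_indicator_norm_add_increment_powr_le[OF E_F Z_F iZ, unfolded step_eq]
  have I_le: "I \<le> b / s + s powr (p / 2 - 1) * measure M E"
    using indicator_norm_powr_minus_two(2)[OF E_M _ iZ s0] unfolding I_def b_def Z_def by simp
  have "b' \<le> b + A * I + B * measure M E"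
    using step(2) unfolding b_def b'_def I_def A_def B_def by simp
  also have "\<dots> \<le> b + A * (b / s + s powr (p / 2 - 1) * measure M E) + B * measure M E"
    using I_le A0 by simp
  finally have "b' \<le> moment_growth_const * (real m + 1 + 1) powr (p / 2) * measure M E"
    using growth_const_step[of "p / 2" A B "measure M E" "real m + 1" b b'] b_le A0 p_gt_2 nu_nonneg
      expansion_const_pos[OF p_gt_2]
    unfolding moment_growth_const_def A_def B_def s_def by simp
  then show ?case using step(1) unfolding b'_def by (simp add: add.commute)
qed

definition moment_const :: real where
  "moment_const = 2 powr p * (moment_growth_const * 2 powr (p / 2) + (\<integral>x. norm (X 0 x) powr p \<partial>M))"

lemma moment_const_nonneg: "moment_const \<ge> 0"
  unfolding moment_const_def using moment_growth_const_nonneg by simp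

lemma integral_norm_X_powr_bound:
  shows "integrable M (\<lambda>x. norm (X j x) powr p)"
    and "(\<integral>x. norm (X j x) powr p \<partial>M)
        \<le> 2 powr p * (moment_growth_const * (real j + 1) powr (p / 2) + (\<integral>x. norm (X 0 x) powr p \<partial>M))"
proof -
  define Y where "Y x = 2 powr p * (norm (X j x - X 0 x) powr p + norm (X 0 x) powr p)" for x
  have i0: "integrable M (\<lambda>x. norm (X 0 x) powr p)"
    using initial_moment_finite by (intro integrableI_nonneg) auto
  have "space M \<in> sets (F 0)" using sets.top[of "F 0"] space_F[of 0] by simp
  from increment_moment_growth[OF this, of j]
  have i: "integrable M (\<lambda>x. norm (X j x - X 0 x) powr p)"
    and le: "(\<integral>x. norm (X j x - X 0 x) powr p \<partial>M) \<le> moment_growth_const * (real j + 1) powr (p / 2)"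
    by (simp_all add: prob_space cong: Bochner_Integration.integrable_cong Bochner_Integration.integral_cong)
  have iY: "integrable M Y" unfolding Y_def using i i0 by auto
  have pointwise: "norm (X j x) powr p \<le> Y x" for x
  proof -
    have "norm (X j x) \<le> norm (X j x - X 0 x) + norm (X 0 x)"
      using norm_triangle_ineq[of "X j x - X 0 x" "X 0 x"] by simp
    then have "norm (X j x) powr p \<le> (norm (X j x - X 0 x) + norm (X 0 x)) powr p"
      using p_gt_2 by (intro powr_mono2) auto
    also have "\<dots> \<le> Y x" unfolding Y_def using p_gt_2 by (intro add_powr_le) auto
    finally show ?thesis .
  qed
  show int: "integrable M (\<lambda>x. norm (X j x) powr p)"
    by (rule Bochner_Integration.integrable_bound[OF iY]) (use pointwise in \<open>auto intro!: AE_I2 order_trans[OF _ abs_ge_self]\<close>)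
  have "(\<integral>x. norm (X j x) powr p \<partial>M) \<le> (\<integral>x. Y x \<partial>M)"
    using int iY pointwise by (intro integral_mono) auto
  also have "\<dots> = 2 powr p * ((\<integral>x. norm (X j x - X 0 x) powr p \<partial>M) + (\<integral>x. norm (X 0 x) powr p \<partial>M))"
    unfolding Y_def using i i0 by simp
  also have "\<dots> \<le> 2 powr p * (moment_growth_const * (real j + 1) powr (p / 2) + (\<integral>x. norm (X 0 x) powr p \<partial>M))"
    using le by (intro mult_left_mono add_right_mono) auto
  finally show "(\<integral>x. norm (X j x) powr p \<partial>M)
      \<le> 2 powr p * (moment_growth_const * (real j + 1) powr (p / 2) + (\<integral>x. norm (X 0 x) powr p \<partial>M))" .
qed

lemma integral_norm_X_powr_le:
  assumes j: "j \<ge> 1"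
  shows "(\<integral>x. norm (X j x) powr p \<partial>M) \<le> moment_const * real j powr (p / 2)"
proof -
  define c where "c = (\<integral>x. norm (X 0 x) powr p \<partial>M)"
  have "moment_growth_const * (real j + 1) powr (p / 2) \<le> moment_growth_const * 2 powr (p / 2) * real j powr (p / 2)"
    using j p_gt_2 moment_growth_const_nonneg powr_mono2[of "p / 2" "real j + 1" "2 * real j"]
    by (simp add: powr_mult mult.assoc mult_left_mono)
  moreover have "c \<le> c * real j powr (p / 2)"
    using j p_gt_2 mult_left_mono[of 1 "real j powr (p / 2)" c] unfolding c_def by (simp add: ge_one_powr_ge_zero)
  ultimately have "moment_growth_const * (real j + 1) powr (p / 2) + c
      \<le> (moment_growth_const * 2 powr (p / 2) + c) * real j powr (p / 2)"
    by (simp add: distrib_right)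
  then show ?thesis
    using integral_norm_X_powr_bound(2)[of j] unfolding moment_const_def c_def[symmetric]
    by (simp add: mult_left_mono mult.assoc order_trans)
qed

section \<open>Survival events and large jumps\<close>

definition survival_event :: "nat \<Rightarrow> 'w set" where
  "survival_event j = {x \<in> space M. \<forall>i\<in>{1..j}. real i \<le> norm (X i x)}"

lemma survival_event_sets: "survival_event j \<in> sets (F j)"
proof -
  have "Measurable.pred (F j) (\<lambda>x. \<forall>i\<in>{1..j}. real i \<le> norm (X i x))"
  proof (rule pred_intros_finite(3))
    fix i assume "i \<in> {1..j}"
    then have [measurable]: "X i \<in> borel_measurable (F j)" using X_measurable_F by auto
    show "Measurable.pred (F j) (\<lambda>x. real i \<le> norm (X i x))" by measurable
  qed simp
  then have "{x \<in> space (F j). \<forall>i\<in>{1..j}. real i \<le> norm (X i x)} \<in> sets (F j)" by (rule predE)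
  then show ?thesis unfolding survival_event_def space_F .
qed

lemma survival_event_measurable[measurable]: "survival_event j \<in> sets M"
  using sets_F_imp_M[OF survival_event_sets] .

lemma measure_survival_event_le:
  assumes j: "j \<ge> 1"
  shows "measure M (survival_event j) \<le> moment_const * real j powr (- p / 2)"
proof -
  have jp: "real j powr p > 0" using j by simp
  have "measure M (survival_event j) \<le> measure M {x \<in> space M. real j powr p \<le> norm (X j x) powr p}"
    using j p_gt_2 by (intro finite_measure_mono) (auto simp: survival_event_def intro!: powr_mono2)
  also have "\<dots> \<le> (\<integral>x. norm (X j x) powr p \<partial>M) / real j powr p"
    using integral_norm_X_powr_bound(1) jp by (intro integral_Markov_inequality_measure[where A = "space M"]) auto
  also have "\<dots> \<le> moment_const * real j powr (p / 2) / real j powr p"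
    using integral_norm_X_powr_le[OF j] jp by (intro divide_right_mono) auto
  also have "\<dots> = moment_const * (real j powr (p / 2) / real j powr p)" by simp
  also have "real j powr (p / 2) / real j powr p = real j powr (- p / 2)"
    using powr_diff[of "real j" "p / 2" p] by simp
  finally show ?thesis .
qed

definition survival_sum_bound :: real where
  "survival_sum_bound = 1 + moment_const * (\<Sum>j. real j powr (- p / 2))"

lemma sum_measure_survival_event_le: "(\<Sum>j<n. measure M (survival_event j)) \<le> survival_sum_bound"
proof -
  have summable: "summable (\<lambda>j. real j powr (- p / 2))"
    using p_gt_2 by (subst summable_real_powr_iff) auto
  have "measure M (survival_event j) \<le> (if j = 0 then 1 else 0) + moment_const * real j powr (- p / 2)" for j
    using measure_survival_event_le[of j] by (cases "j = 0") auto
  then have "(\<Sum>j<n. measure M (survival_event j))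
      \<le> (\<Sum>j<n. (if j = 0 then 1 else 0) + moment_const * real j powr (- p / 2))"
    by (rule sum_mono)
  also have "\<dots> = (\<Sum>j<n. (if j = 0 then 1 else 0 :: real)) + moment_const * (\<Sum>j<n. real j powr (- p / 2))"
    by (simp add: sum.distrib sum_distrib_left)
  also have "(\<Sum>j<n. (if j = 0 then 1 else 0 :: real)) \<le> 1" by (cases "n = 0") (auto simp: sum.delta)
  also have "(\<Sum>j<n. real j powr (- p / 2)) \<le> (\<Sum>j. real j powr (- p / 2))"
    by (rule sum_le_suminf[OF summable]) auto
  finally show ?thesis unfolding survival_sum_bound_def using moment_const_nonneg by (simp add: mult_left_mono)
qed

definition jump_event :: "nat \<Rightarrow> real \<Rightarrow> 'w set" where
  "jump_event j a = survival_event j \<inter> {x \<in> space M. a \<le> norm (X (Suc j) x - X j x)}"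

lemma jump_event_sets: "jump_event j a \<in> sets (F (Suc j))"
proof -
  have "survival_event j \<in> sets (F (Suc j))" using survival_event_sets[of j] sets_F_mono[of j "Suc j"] by auto
  moreover have [measurable]: "X j \<in> borel_measurable (F (Suc j))" "X (Suc j) \<in> borel_measurable (F (Suc j))"
    using X_measurable_F by auto
  have "{x \<in> space (F (Suc j)). a \<le> norm (X (Suc j) x - X j x)} \<in> sets (F (Suc j))" by measurable
  ultimately show ?thesis unfolding jump_event_def space_F by auto
qed

lemma jump_event_measurable[measurable]: "jump_event j a \<in> sets M"
  using sets_F_imp_M[OF jump_event_sets] .

lemma jump_event_increment_moment:
  assumes a: "a > 0" and r: "r < p"
  shows "integrable M (\<lambda>x. indicator (jump_event j a) x * norm (X (Suc j) x - X j x) powr r)"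
    and "(\<integral>x. indicator (jump_event j a) x * norm (X (Suc j) x - X j x) powr r \<partial>M)
        \<le> a powr (r - p) * (nu * measure M (survival_event j))"
    and "a powr p * measure M (jump_event j a) \<le> nu * measure M (survival_event j)"
proof -
  define B where "B = survival_event j"
  define E where "E = jump_event j a"
  define u where "u x = norm (X (Suc j) x - X j x)" for x
  have E_B: "E \<subseteq> B" and E_u: "x \<in> E \<Longrightarrow> a \<le> u x" for x
    unfolding E_def B_def jump_event_def u_def by auto
  have [measurable]: "B \<in> sets M" "E \<in> sets M" "u \<in> borel_measurable M" unfolding B_def E_def u_def by auto
  have B_F: "(\<lambda>x. indicator B x :: real) \<in> borel_measurable (F j)"
    unfolding B_def using survival_event_sets by measurable
  have iB: "integrable M (\<lambda>x. indicator B x * u x powr p)"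
    and B_le: "(\<integral>x. indicator B x * u x powr p \<partial>M) \<le> nu * measure M B"
    using integral_mult_increment_le[OF B_F] unfolding u_def by (auto simp: less_top[symmetric])
  have le_r: "indicator E x * u x powr r \<le> a powr (r - p) * (indicator B x * u x powr p)" for x
  proof (cases "x \<in> E")
    case True
    have "u x powr r = u x powr p * u x powr (r - p)" by (simp add: powr_add[symmetric])
    also have "\<dots> \<le> u x powr p * a powr (r - p)"
      using E_u[OF True] a r by (intro mult_left_mono powr_mono2') auto
    finally show ?thesis using True E_B by (auto simp: mult.commute)
  qed (auto simp: indicator_def)
  show int: "integrable M (\<lambda>x. indicator (jump_event j a) x * norm (X (Suc j) x - X j x) powr r)"
    unfolding E_def[symmetric] u_def[symmetric]
    by (rule Bochner_Integration.integrable_bound[where f = "\<lambda>x. a powr (r - p) * (indicator B x * u x powr p)"])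
      (use iB le_r in \<open>auto intro!: AE_I2 simp: indicator_def\<close>)
  have "(\<integral>x. indicator E x * u x powr r \<partial>M) \<le> (\<integral>x. a powr (r - p) * (indicator B x * u x powr p) \<partial>M)"
    using int iB le_r unfolding E_def u_def by (intro integral_mono) auto
  also have "\<dots> \<le> a powr (r - p) * (nu * measure M B)" using B_le by (simp add: mult_left_mono)
  finally show "(\<integral>x. indicator (jump_event j a) x * norm (X (Suc j) x - X j x) powr r \<partial>M)
      \<le> a powr (r - p) * (nu * measure M (survival_event j))" unfolding E_def u_def B_def .
  have le_p: "a powr p * indicator E x \<le> indicator B x * u x powr p" for x
  proof (cases "x \<in> E")
    case True
    then have "x \<in> B" using E_B by auto
    with E_u[OF True] a p_gt_2 True show ?thesis by (auto intro: powr_mono2)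
  qed (auto simp: indicator_def)
  have "a powr p * measure M E = (\<integral>x. a powr p * indicator E x \<partial>M)" by simp
  also have "\<dots> \<le> (\<integral>x. indicator B x * u x powr p \<partial>M)"
    using iB le_p by (intro integral_mono) (auto simp: less_top[symmetric])
  finally show "a powr p * measure M (jump_event j a) \<le> nu * measure M (survival_event j)"
    using B_le unfolding E_def B_def by linarith
qed

lemma jump_event_tail_moment:
  assumes n: "n \<ge> 1" and j: "j < n"
  shows "integrable M (\<lambda>x. indicator (jump_event j (real n / 3)) x * norm (X n x - X (Suc j) x) powr p)"
    and "(\<integral>x. indicator (jump_event j (real n / 3)) x * norm (X n x - X (Suc j) x) powr p \<partial>M)
        \<le> moment_growth_const * 3 powr p * (nu * measure M (survival_event j))"
proof -
  define a where "a = real n / 3"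
  have a0: "a > 0" unfolding a_def using n by simp
  have n_eq: "Suc j + (n - Suc j) = n" using j by simp
  note growth = increment_moment_growth[OF jump_event_sets, of j a "n - Suc j", unfolded n_eq]
  then show "integrable M (\<lambda>x. indicator (jump_event j (real n / 3)) x * norm (X n x - X (Suc j) x) powr p)"
    unfolding a_def by blast
  have "(real (n - Suc j) + 1) powr (p / 2) \<le> real n powr (p / 2)" using j p_gt_2 by (intro powr_mono2) auto
  also have "\<dots> \<le> real n powr p" using n p_gt_2 by (intro powr_mono) auto
  also have "\<dots> = 3 powr p * a powr p" unfolding a_def by (simp add: powr_divide)
  finally have "(real (n - Suc j) + 1) powr (p / 2) * measure M (jump_event j a)
      \<le> 3 powr p * a powr p * measure M (jump_event j a)"
    by (rule mult_right_mono) simp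
  also have "\<dots> = 3 powr p * (a powr p * measure M (jump_event j a))" by (simp add: mult.assoc)
  also have "\<dots> \<le> 3 powr p * (nu * measure M (survival_event j))"
    using jump_event_increment_moment(3)[OF a0, of 0] p_gt_2 by simp
  finally have "moment_growth_const * ((real (n - Suc j) + 1) powr (p / 2) * measure M (jump_event j a))
      \<le> moment_growth_const * (3 powr p * (nu * measure M (survival_event j)))"
    using moment_growth_const_nonneg by (rule mult_left_mono)
  with growth show "(\<integral>x. indicator (jump_event j (real n / 3)) x * norm (X n x - X (Suc j) x) powr p \<partial>M)
      \<le> moment_growth_const * 3 powr p * (nu * measure M (survival_event j))"
    unfolding a_def by (simp add: mult.assoc)
qed

definition jump_bound :: "nat \<Rightarrow> real \<Rightarrow> nat \<Rightarrow> 'w \<Rightarrow> real" where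
  "jump_bound n r j x = indicator (jump_event j (real n / 3)) x * (3 powr r * (norm (X (Suc j) x - X j x) powr r
     + (real n / 3) powr (r - p) * norm (X n x - X (Suc j) x) powr p))"

lemma jump_bound_nonneg: "jump_bound n r j x \<ge> 0"
  unfolding jump_bound_def by (auto simp: indicator_def)

lemma integral_jump_bound_le:
  assumes n: "n \<ge> 1" and j: "j < n" and r: "0 < r" "r < p"
  shows "integrable M (jump_bound n r j)"
    and "(\<integral>x. jump_bound n r j x \<partial>M)
         \<le> 3 powr p * nu * (1 + 3 powr p * moment_growth_const) * measure M (survival_event j) / real n powr (p - r)"
proof -
  define a where "a = real n / 3"
  define E where "E = jump_event j a"
  define u where "u x = indicator E x * norm (X (Suc j) x - X j x) powr r" for x
  define w where "w x = indicator E x * norm (X n x - X (Suc j) x) powr p" for x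
  define \<mu> where "\<mu> = nu * measure M (survival_event j)"
  have a0: "a > 0" unfolding a_def using n by simp
  have eq: "jump_bound n r j = (\<lambda>x. 3 powr r * u x + 3 powr r * a powr (r - p) * w x)"
    unfolding jump_bound_def u_def w_def E_def a_def by (auto simp: algebra_simps)
  have iu: "integrable M u" and u_le: "(\<integral>x. u x \<partial>M) \<le> a powr (r - p) * \<mu>"
    using jump_event_increment_moment[OF a0 r(2)] unfolding u_def E_def \<mu>_def by auto
  have iw: "integrable M w" and w_le: "(\<integral>x. w x \<partial>M) \<le> moment_growth_const * 3 powr p * \<mu>"
    using jump_event_tail_moment[OF n j] unfolding w_def E_def \<mu>_def a_def by auto
  show "integrable M (jump_bound n r j)" unfolding eq using iu iw by auto
  have "(\<integral>x. jump_bound n r j x \<partial>M) = 3 powr r * (\<integral>x. u x \<partial>M) + 3 powr r * a powr (r - p) * (\<integral>x. w x \<partial>M)"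
    unfolding eq using iu iw by simp
  also have "\<dots> \<le> 3 powr r * (a powr (r - p) * \<mu>) + 3 powr r * a powr (r - p) * (moment_growth_const * 3 powr p * \<mu>)"
    using u_le w_le by (intro add_mono mult_left_mono) auto
  also have "\<dots> = 3 powr r * a powr (r - p) * (nu * (1 + 3 powr p * moment_growth_const) * measure M (survival_event j))"
    unfolding \<mu>_def by (simp add: algebra_simps)
  also have "3 powr r * a powr (r - p) = 3 powr p / real n powr (p - r)"
  proof -
    have "a powr (r - p) = real n powr (r - p) / 3 powr (r - p)" unfolding a_def by (simp add: powr_divide)
    moreover have "3 powr r / 3 powr (r - p) = (3::real) powr p" by (simp add: powr_diff[symmetric])
    moreover have "real n powr (r - p) = 1 / real n powr (p - r)"
      using powr_minus_divide[of "real n" "p - r"] by simp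
    ultimately show ?thesis by (simp add: field_simps)
  qed
  finally show "(\<integral>x. jump_bound n r j x \<partial>M)
      \<le> 3 powr p * nu * (1 + 3 powr p * moment_growth_const) * measure M (survival_event j) / real n powr (p - r)"
    by (simp add: field_simps)
qed

lemma norm_powr_le_sum_jump_bound:
  assumes n: "n \<ge> 1" and r: "0 < r" "r < p" and x: "x \<in> space M"
    and tau: "first_time (\<lambda>m. m > 0 \<and> norm (X m x) < real m) > enat n"
    and S_T: "first_time (\<lambda>j. norm (X j x) \<ge> real n / 3)
                > first_time (\<lambda>j. norm (X (Suc j) x - X j x) \<ge> real n / 3)"
  shows "norm (X n x) powr r \<le> (\<Sum>j<n. jump_bound n r j x)"
proof -
  define a where "a = real n / 3"
  have a0: "a > 0" unfolding a_def using n by simp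
  have large: "real m \<le> norm (X m x)" if "0 < m" "m \<le> n" for m
    using not_less_first_time[OF tau, of m] that by auto
  obtain j where jump: "a \<le> norm (X (Suc j) x - X j x)" and inside: "\<And>i. i \<le> j \<Longrightarrow> norm (X i x) < a"
    using first_time_less_first_time[OF S_T] unfolding a_def by (metis not_le)
  have "j < n"
  proof (rule ccontr)
    assume "\<not> j < n"
    then have "norm (X n x) < a" using inside by simp
    with large[of n] n show False unfolding a_def by auto
  qed
  have "x \<in> survival_event j" using large \<open>j < n\<close> x unfolding survival_event_def by auto
  then have "x \<in> jump_event j a" using jump x unfolding jump_event_def by auto
  have "norm (X n x) \<le> norm (X j x) + norm (X (Suc j) x - X j x) + norm (X n x - X (Suc j) x)"
    using norm_triangle_ineq[of "X j x + (X (Suc j) x - X j x)" "X n x - X (Suc j) x"]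
      norm_triangle_ineq[of "X j x" "X (Suc j) x - X j x"] by simp
  then have "norm (X n x) < a + norm (X (Suc j) x - X j x) + norm (X n x - X (Suc j) x)"
    using inside[of j] by simp
  then have "norm (X n x) powr r \<le> jump_bound n r j x"
    using powr_le_of_less_add3[OF a0 jump _ _ _ r] \<open>x \<in> jump_event j a\<close>
    unfolding jump_bound_def a_def by simp
  also have "\<dots> \<le> (\<Sum>j<n. jump_bound n r j x)"
    using \<open>j < n\<close> jump_bound_nonneg by (intro member_le_sum) auto
  finally show ?thesis .
qed

lemma nn_integral_stopped_le:
  assumes n: "n \<ge> 1" and r: "0 < r" "r < p"
  shows "(\<integral>\<^sup>+ x. ennreal (norm (X n x) powr r
        * indicator {y. first_time (\<lambda>m. m > 0 \<and> norm (X m y) < real m) > enat n} x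
        * indicator {y. first_time (\<lambda>j. norm (X j y) \<ge> real n / 3)
                        > first_time (\<lambda>j. norm (X (Suc j) y - X j y) \<ge> real n / 3)} x) \<partial>M)
     \<le> ennreal (3 powr p * nu * (1 + 3 powr p * moment_growth_const) * survival_sum_bound / real n powr (p - r))"
proof -
  define K where "K = 3 powr p * nu * (1 + 3 powr p * moment_growth_const)"
  have K0: "K \<ge> 0" unfolding K_def using nu_nonneg moment_growth_const_nonneg by auto
  have int: "integrable M (jump_bound n r j)" if "j < n" for j
    using integral_jump_bound_le(1)[OF n that r] .
  have "(\<integral>\<^sup>+ x. ennreal (norm (X n x) powr r
        * indicator {y. first_time (\<lambda>m. m > 0 \<and> norm (X m y) < real m) > enat n} x
        * indicator {y. first_time (\<lambda>j. norm (X j y) \<ge> real n / 3)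
                        > first_time (\<lambda>j. norm (X (Suc j) y - X j y) \<ge> real n / 3)} x) \<partial>M)
      \<le> (\<integral>\<^sup>+ x. ennreal (\<Sum>j<n. jump_bound n r j x) \<partial>M)"
    using norm_powr_le_sum_jump_bound[OF n r] jump_bound_nonneg
    by (intro nn_integral_mono ennreal_leI) (auto simp: indicator_def intro: sum_nonneg)
  also have "\<dots> = ennreal (\<Sum>j<n. \<integral>x. jump_bound n r j x \<partial>M)"
    using int by (subst nn_integral_eq_integral) (auto intro: sum_nonneg jump_bound_nonneg)
  also have "(\<Sum>j<n. \<integral>x. jump_bound n r j x \<partial>M) \<le> (\<Sum>j<n. K * measure M (survival_event j) / real n powr (p - r))"
    using integral_jump_bound_le(2)[OF n _ r] unfolding K_def by (intro sum_mono) auto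
  also have "\<dots> = K / real n powr (p - r) * (\<Sum>j<n. measure M (survival_event j))"
    by (simp add: sum_distrib_left)
  also have "\<dots> \<le> K / real n powr (p - r) * survival_sum_bound"
    using sum_measure_survival_event_le K0 by (intro mult_left_mono) auto
  finally show ?thesis unfolding K_def by (simp add: ennreal_leI mult_ac)
qed

end

theorem lemmaA2:
  fixes M :: "'w measure" and F :: "nat \<Rightarrow> 'w measure"
    and X :: "nat \<Rightarrow> 'w \<Rightarrow> 'a::euclidean_space"
    and p r \<nu> :: real
  assumes "prob_space M"
    and "martingale M F X"
    and "p > 2"
    and "(\<integral>\<^sup>+ x. ennreal (norm (X 0 x) powr p) \<partial>M) < \<infinity>"
    and "\<And>n. AE x in M. nn_cond_exp M (F n) (\<lambda>y. ennreal (norm (X (Suc n) y - X n y) powr p)) x \<le> ennreal \<nu>"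
    and "0 < r" and "r < p"
  shows "\<exists>\<theta>::real. \<forall>n::nat. n \<ge> 1 \<longrightarrow>
     (\<integral>\<^sup>+ x. ennreal (norm (X n x) powr r
        * indicator {y. first_time (\<lambda>m. m > 0 \<and> norm (X m y) < real m) > enat n} x
        * indicator {y. first_time (\<lambda>j. norm (X j y) \<ge> real n / 3)
                        > first_time (\<lambda>j. norm (X (Suc j) y - X j y) \<ge> real n / 3)} x) \<partial>M)
     \<le> ennreal (\<theta> / real n powr (p - r))"
proof -
  interpret martingale_bounded_increments M F X p \<nu>
    using assms(1-5) by (rule martingale_bounded_increments.intro)
  show ?thesis
    using nn_integral_stopped_le[OF _ assms(6,7)] by blast
qed

end
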